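(* Let $r\ge2$, $m=2$, $a_{ij}\in\mathbb{C}$ ($i=1,2$, $1\le j\le r$), $f_i=\sum_{j=1}^r a_{ij}z_j$, and let $S_1$ be the family $(z_1^2,\dots,z_r^2,f_1^2,f_2^2)$. Then $S_1$ is linearly dependent if and only if at least one of the following holds: (a) there are two members of $S_1$ (with distinct indices) that are linearly dependent, i.e. one is a scalar multiple of the other; (b) there exist $1\le M\ne N\le r$ such that $a_{1i}=a_{2i}=0$ for all $i\notin\{M,N\}$, i.e. $f_1=a_{1M}z_M+a_{1N}z_N$ and $f_2=a_{2M}z_M+a_{2N}z_N$.
   Context: A family of polynomials is linearly independent over $\mathbb{C}$ if no nontrivial $\mathbb{C}$-linear combination of its members (counted with their indices) vanishes; otherwise it is linearly dependent. *)

theory Defs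
  imports Complex_Main
begin

text \<open>Polynomials in the variables z_1,...,z_r over C are represented by their
polynomial functions (nat => complex) => complex; since C is infinite, a polynomial
vanishes iff its function vanishes, so linear (in)dependence is the same notion.\<close>

definition lin_dep_family :: "'i set \<Rightarrow> ('i \<Rightarrow> (nat \<Rightarrow> complex) \<Rightarrow> complex) \<Rightarrow> bool" where
  "lin_dep_family I P \<longleftrightarrow>
     (\<exists>c :: 'i \<Rightarrow> complex. (\<exists>k\<in>I. c k \<noteq> 0) \<and> (\<forall>z. (\<Sum>k\<in>I. c k * P k z) = 0))"

definition linform :: "nat \<Rightarrow> (nat \<Rightarrow> complex) \<Rightarrow> (nat \<Rightarrow> complex) \<Rightarrow> complex" where
  "linform r b z = (\<Sum>j=1..r. b j * z j)"

definition S1 :: "nat \<Rightarrow> (nat \<Rightarrow> nat \<Rightarrow> complex) \<Rightarrow> nat \<Rightarrow> (nat \<Rightarrow> complex) \<Rightarrow> complex" where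
  "S1 r a k z = (if k \<le> r then (z k)^2
                 else if k = r + 1 then (linform r (a 1) z)^2
                 else (linform r (a 2) z)^2)"

end

theory Submission
  imports Defs
begin

text \<open>A vanishing combination \<Sum> c_k z_k^2 + d_1 f_1^2 + d_2 f_2^2 = 0 has (d_1, d_2) \<noteq> 0,
  and evaluating it at 0/1-vectors shows that d_1 f_1^2 + d_2 f_2^2 is diagonal:
  d_1 a_1i a_1j + d_2 a_2i a_2j = 0 for i \<noteq> j. If the coefficient vectors of f_1, f_2 are
  proportional, then f_1^2, f_2^2 are dependent. If one of d_1, d_2 vanishes, the other f_l has
  at most one nonzero coefficient, so f_l^2 is a multiple of some z_i^2. Otherwise a nonzero
  2 \<times> 2 minor at i, j forces both coefficient vectors to vanish outside {i, j}. Conversely,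
  when f_1, f_2 involve only z_M and z_N, the four squares z_M^2, z_N^2, f_1^2, f_2^2 lie in the
  three-dimensional span of z_M^2, z_M z_N, z_N^2.\<close>

lemma lin_dep_family_mono:
  assumes "J \<subseteq> I" "finite I" "lin_dep_family J P"
  shows "lin_dep_family I P"
proof -
  from assms(3) obtain c where c: "\<exists>k\<in>J. c k \<noteq> 0" "\<forall>z. (\<Sum>k\<in>J. c k * P k z) = 0"
    unfolding lin_dep_family_def by blast
  define c' where "c' k = (if k \<in> J then c k else 0)" for k
  have "(\<Sum>k\<in>I. c' k * P k z) = (\<Sum>k\<in>J. c k * P k z)" for z
  proof -
    have "(\<Sum>k\<in>I. c' k * P k z) = (\<Sum>k\<in>J. c' k * P k z)"
      by (rule sum.mono_neutral_right) (use assms in \<open>auto simp: c'_def\<close>)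
    also have "\<dots> = (\<Sum>k\<in>J. c k * P k z)" by (rule sum.cong) (auto simp: c'_def)
    finally show ?thesis .
  qed
  then show ?thesis unfolding lin_dep_family_def
    using c assms(1) by (intro exI[of _ c']) (auto simp: c'_def)
qed

lemma lin_dep_family_pairI:
  assumes "i \<noteq> j" "c \<noteq> 0 \<or> d \<noteq> 0" "\<And>z. c * P i z + d * P j z = 0"
  shows "lin_dep_family {i, j} P"
  unfolding lin_dep_family_def
  using assms by (intro exI[of _ "\<lambda>k. if k = i then c else d"]) auto

lemma lin_dep_family_pair_squares:
  assumes "i \<noteq> j" "\<And>z. P i z = (f z)^2" "\<And>z. P j z = (u * f z)^2"
  shows "lin_dep_family {i, j} P"
  by (rule lin_dep_family_pairI[of i j "u^2" "-1"]) (use assms in \<open>auto simp: power_mult_distrib\<close>)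

lemma linform_supported:
  assumes "S \<subseteq> {1..r}" "\<forall>j\<in>{1..r} - S. b j = 0"
  shows "linform r b z = (\<Sum>j\<in>S. b j * z j)"
  unfolding linform_def using assms by (intro sum.mono_neutral_right) auto

lemma linform_of_bool:
  assumes "S \<subseteq> {1..r}"
  shows "linform r b (\<lambda>k. of_bool (k \<in> S)) = sum b S"
  unfolding linform_def using assms by (simp add: Int_absorb1)

lemma S1_square: "k \<in> {1..r} \<Longrightarrow> S1 r a k z = (z k)^2"
  by (simp add: S1_def)

lemma S1_linform: "l \<in> {1, 2} \<Longrightarrow> S1 r a (r + l) z = (linform r (a l) z)^2"
  by (auto simp: S1_def)

lemma sum_S1:
  "(\<Sum>k\<in>{1..r+2}. c k * S1 r a k z) =
     (\<Sum>k\<in>{1..r}. c k * (z k)^2) + c (r+1) * (linform r (a 1) z)^2 + c (r+2) * (linform r (a 2) z)^2"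
proof -
  have "{1..r+2} = insert (r+2) (insert (r+1) {1..r})" by auto
  then have "(\<Sum>k\<in>{1..r+2}. c k * S1 r a k z) =
      c (r+2) * S1 r a (r+2) z + c (r+1) * S1 r a (r+1) z + (\<Sum>k\<in>{1..r}. c k * S1 r a k z)"
    by simp
  also have "(\<Sum>k\<in>{1..r}. c k * S1 r a k z) = (\<Sum>k\<in>{1..r}. c k * (z k)^2)"
    by (rule sum.cong) (auto simp: S1_square)
  finally show ?thesis by (simp add: S1_def)
qed

text \<open>At the 0/1-vector of S every z_k^2 equals z_k.\<close>
lemma quadratic_relation_at_of_bool:
  assumes rel: "\<And>z. (\<Sum>k\<in>{1..r}. c k * (z k)^2) + d1 * (linform r A z)^2 + d2 * (linform r B z)^2 = 0"
    and "S \<subseteq> {1..r}"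
  shows "sum c S + d1 * (sum A S)^2 + d2 * (sum B S)^2 = 0"
proof -
  let ?z = "\<lambda>k. of_bool (k \<in> S) :: complex"
  have "(\<Sum>k\<in>{1..r}. c k * (?z k)^2) = (\<Sum>k\<in>{1..r}. c k * ?z k)"
    by (intro sum.cong) auto
  also have "\<dots> = sum c S"
    using assms(2) by (simp add: Int_absorb1)
  finally have "(\<Sum>k\<in>{1..r}. c k * (?z k)^2) = sum c S" .
  moreover have "linform r A ?z = sum A S" "linform r B ?z = sum B S"
    using linform_of_bool[OF assms(2)] by auto
  ultimately show ?thesis using rel[of ?z] by simp
qed

lemma quadratic_relation_cross_terms:
  assumes rel: "\<And>z. (\<Sum>k\<in>{1..r}. c k * (z k)^2) + d1 * (linform r A z)^2 + d2 * (linform r B z)^2 = 0"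
    and ij: "i \<in> {1..r}" "j \<in> {1..r}" "i \<noteq> j"
  shows "d1 * A i * A j + d2 * B i * B j = 0"
proof -
  have diag: "c k + d1 * (A k)^2 + d2 * (B k)^2 = 0" if "k \<in> {1..r}" for k
    using quadratic_relation_at_of_bool[OF rel, of "{k}"] that by simp
  have "c i + c j + d1 * (A i + A j)^2 + d2 * (B i + B j)^2 = 0"
    using quadratic_relation_at_of_bool[OF rel, of "{i, j}"] ij by simp
  also have "c i + c j + d1 * (A i + A j)^2 + d2 * (B i + B j)^2 =
      (c i + d1 * (A i)^2 + d2 * (B i)^2) + (c j + d1 * (A j)^2 + d2 * (B j)^2)
      + 2 * (d1 * A i * A j + d2 * B i * B j)"
    by (simp add: algebra_simps power2_eq_square)
  finally have "2 * (d1 * A i * A j + d2 * B i * B j) = 0"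
    by (simp only: diag ij add_0)
  then show ?thesis by (metis mult_eq_0_iff zero_neq_numeral)
qed

lemma single_support_if_products_vanish:
  fixes A :: "'a \<Rightarrow> 'b::semiring_no_zero_divisors"
  assumes "\<forall>i\<in>I. \<forall>j\<in>I. i \<noteq> j \<longrightarrow> A i * A j = 0" "I \<noteq> {}"
  shows "\<exists>i\<in>I. \<forall>j\<in>I - {i}. A j = 0"
proof (cases "\<exists>i\<in>I. A i \<noteq> 0")
  case True
  then obtain i where "i \<in> I" "A i \<noteq> 0" by blast
  with assms(1) show ?thesis by (intro bexI[of _ i]) auto
next
  case False
  with assms(2) show ?thesis by blast
qed

lemma proportional_if_minors_vanish:
  fixes A B :: "'a \<Rightarrow> 'b::field"
  assumes "\<forall>i\<in>I. \<forall>j\<in>I. A i * B j = A j * B i"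
  shows "(\<forall>j\<in>I. A j = 0) \<or> (\<exists>u. \<forall>j\<in>I. B j = u * A j)"
proof (cases "\<exists>i\<in>I. A i \<noteq> 0")
  case True
  then obtain i where i: "i \<in> I" "A i \<noteq> 0" by blast
  have "B j = B i / A i * A j" if "j \<in> I" for j
    using assms i that by (simp add: field_simps)
  then show ?thesis by blast
qed auto

text \<open>For the nondegenerate form d1 x x' + d2 y y', the vector (A k, B k) is orthogonal to the
  two independent vectors (A i, B i) and (A j, B j), hence zero (Cramer's rule below).\<close>
lemma vanish_if_orthogonal_to_independent_pair:
  fixes A B :: "'a \<Rightarrow> 'b::idom"
  assumes orth: "\<forall>i\<in>I. \<forall>j\<in>I. i \<noteq> j \<longrightarrow> d1 * A i * A j + d2 * B i * B j = 0"
    and "d1 \<noteq> 0" "d2 \<noteq> 0" "i \<in> I" "j \<in> I" "A i * B j \<noteq> A j * B i" "k \<in> I - {i, j}"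
  shows "A k = 0 \<and> B k = 0"
proof -
  have hi: "d1 * A k * A i + d2 * B k * B i = 0" and hj: "d1 * A k * A j + d2 * B k * B j = 0"
    using orth assms(4-7) by auto
  have "d1 * A k * (A i * B j - A j * B i) =
      B j * (d1 * A k * A i + d2 * B k * B i) - B i * (d1 * A k * A j + d2 * B k * B j)"
    by (simp add: algebra_simps)
  also have "\<dots> = 0" by (simp only: hi hj mult_zero_right diff_self)
  finally have "d1 * A k * (A i * B j - A j * B i) = 0" .
  then have "A k = 0" using assms(2,6) by simp
  have "d2 * B k * (A i * B j - A j * B i) =
      A i * (d1 * A k * A j + d2 * B k * B j) - A j * (d1 * A k * A i + d2 * B k * B i)"
    by (simp add: algebra_simps)
  also have "\<dots> = 0" by (simp only: hi hj mult_zero_right diff_self)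
  finally have "d2 * B k * (A i * B j - A j * B i) = 0" .
  with \<open>A k = 0\<close> show ?thesis using assms(3,6) by simp
qed

lemma diagonal_combination_of_two_squares_cases:
  fixes A B :: "'a \<Rightarrow> 'b::field"
  assumes orth: "\<forall>i\<in>I. \<forall>j\<in>I. i \<noteq> j \<longrightarrow> d1 * A i * A j + d2 * B i * B j = 0"
    and nz: "d1 \<noteq> 0 \<or> d2 \<noteq> 0" and "I \<noteq> {}"
  shows "(\<exists>i\<in>I. \<forall>j\<in>I - {i}. A j = 0) \<or> (\<exists>i\<in>I. \<forall>j\<in>I - {i}. B j = 0) \<or>
         (\<exists>u. \<forall>j\<in>I. B j = u * A j) \<or>
         (\<exists>M\<in>I. \<exists>N\<in>I. M \<noteq> N \<and> (\<forall>k\<in>I - {M, N}. A k = 0 \<and> B k = 0))"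
proof (cases "\<forall>i\<in>I. \<forall>j\<in>I. A i * B j = A j * B i")
  case True
  then show ?thesis using proportional_if_minors_vanish[of I A B] \<open>I \<noteq> {}\<close> by blast
next
  case False
  then obtain i j where ij: "i \<in> I" "j \<in> I" "A i * B j \<noteq> A j * B i" by blast
  consider "d1 = 0" | "d2 = 0" | "d1 \<noteq> 0" "d2 \<noteq> 0" by blast
  then show ?thesis
  proof cases
    case 1
    with orth nz have "\<forall>i\<in>I. \<forall>j\<in>I. i \<noteq> j \<longrightarrow> B i * B j = 0" by auto
    then show ?thesis using single_support_if_products_vanish \<open>I \<noteq> {}\<close> by blast
  next
    case 2
    with orth nz have "\<forall>i\<in>I. \<forall>j\<in>I. i \<noteq> j \<longrightarrow> A i * A j = 0" by auto
    then show ?thesis using single_support_if_products_vanish \<open>I \<noteq> {}\<close> by blast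
  next
    case 3
    have "i \<noteq> j" using ij by auto
    with vanish_if_orthogonal_to_independent_pair[OF orth 3 ij] ij show ?thesis by blast
  qed
qed

lemma S1_dep_imp_diagonal_combination:
  assumes "lin_dep_family {1..r+2} (S1 r a)"
  obtains d1 d2 where "d1 \<noteq> 0 \<or> d2 \<noteq> 0"
    "\<forall>i\<in>{1..r}. \<forall>j\<in>{1..r}. i \<noteq> j \<longrightarrow> d1 * a 1 i * a 1 j + d2 * a 2 i * a 2 j = 0"
proof -
  from assms obtain c where nontrivial: "\<exists>k\<in>{1..r+2}. c k \<noteq> 0"
    and "\<forall>z. (\<Sum>k\<in>{1..r+2}. c k * S1 r a k z) = 0"
    unfolding lin_dep_family_def by blast
  then have rel: "(\<Sum>k\<in>{1..r}. c k * (z k)^2) + c (r+1) * (linform r (a 1) z)^2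
      + c (r+2) * (linform r (a 2) z)^2 = 0" for z
    by (metis sum_S1)
  have "c (r+1) \<noteq> 0 \<or> c (r+2) \<noteq> 0"
  proof (rule ccontr)
    assume "\<not> (c (r+1) \<noteq> 0 \<or> c (r+2) \<noteq> 0)"
    moreover have "c k + c (r+1) * (a 1 k)^2 + c (r+2) * (a 2 k)^2 = 0" if "k \<in> {1..r}" for k
      using quadratic_relation_at_of_bool[OF rel, of "{k}"] that by simp
    ultimately have "c k = 0" if "k \<in> {1..r+2}" for k
      using that by (cases "k \<le> r") (auto simp: le_Suc_eq)
    with nontrivial show False by blast
  qed
  with quadratic_relation_cross_terms[OF rel] show thesis by (intro that) auto
qed

lemma S1_pair_dep_if_single_support:
  assumes "i \<in> {1..r}" "l \<in> {1, 2}" "\<forall>j\<in>{1..r} - {i}. a l j = 0"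
  shows "lin_dep_family {i, r + l} (S1 r a)"
proof (rule lin_dep_family_pair_squares)
  fix z
  show "S1 r a i z = (z i)^2" using assms(1) by (rule S1_square)
  have "linform r (a l) z = a l i * z i"
    using linform_supported[of "{i}" r "a l"] assms by auto
  then show "S1 r a (r + l) z = (a l i * z i)^2" using S1_linform[OF assms(2)] by simp
qed (use assms in auto)

lemma S1_pair_dep_if_proportional:
  assumes "\<forall>j\<in>{1..r}. a 2 j = u * a 1 j"
  shows "lin_dep_family {r+1, r+2} (S1 r a)"
proof (rule lin_dep_family_pair_squares)
  fix z
  have "linform r (a 2) z = u * linform r (a 1) z"
    unfolding linform_def sum_distrib_left using assms by (intro sum.cong) auto
  then show "S1 r a (r+2) z = (u * linform r (a 1) z)^2"
    by (simp add: S1_def)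
qed (auto simp: S1_def)

text \<open>The cross term of d1 f_1^2 + d2 f_2^2 is 2 (d1 p q + d2 s t) x y, which (st, -pq)
  kills unless pq = 0; then f_1^2 alone is a combination of x^2 and y^2.\<close>
lemma squares_of_binary_linear_forms_dependent:
  fixes p q s t :: "'a::comm_ring_1"
  obtains cx cy d1 d2 where "d1 \<noteq> 0 \<or> d2 \<noteq> 0"
    "\<And>x y. cx * x^2 + cy * y^2 + d1 * (p * x + q * y)^2 + d2 * (s * x + t * y)^2 = 0"
proof (cases "p * q = 0")
  case True
  show thesis
    by (rule that[of 1 0 "-(p^2)" "-(q^2)"]) (use True in \<open>auto simp: algebra_simps power2_eq_square\<close>)
next
  case False
  show thesis
    by (rule that[of "s*t" "-(p*q)" "p*q*s^2 - s*t*p^2" "p*q*t^2 - s*t*q^2"])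
      (use False in \<open>auto simp: algebra_simps power2_eq_square\<close>)
qed

lemma S1_dep_if_two_variables:
  assumes MN: "M \<in> {1..r}" "N \<in> {1..r}" "M \<noteq> N"
    and support: "\<forall>k\<in>{1..r} - {M, N}. a 1 k = 0 \<and> a 2 k = 0"
  shows "lin_dep_family {1..r+2} (S1 r a)"
proof -
  have f: "linform r (a 1) z = a 1 M * z M + a 1 N * z N"
    "linform r (a 2) z = a 2 M * z M + a 2 N * z N" for z
    using linform_supported[of "{M, N}" r] MN support by auto
  obtain cM cN d1 d2 where nz: "d1 \<noteq> 0 \<or> d2 \<noteq> 0" and rel: "\<And>x y. cM * x^2 + cN * y^2
      + d1 * (a 1 M * x + a 1 N * y)^2 + d2 * (a 2 M * x + a 2 N * y)^2 = 0"
    by (rule squares_of_binary_linear_forms_dependent[of "a 1 M" "a 1 N" "a 2 M" "a 2 N"]) auto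
  define c where "c k = (if k = M then cM else if k = N then cN else if k = r+1 then d1
      else if k = r+2 then d2 else 0)" for k
  have c: "c M = cM" "c N = cN" "c (r+1) = d1" "c (r+2) = d2"
    using MN by (auto simp: c_def)
  have "(\<Sum>k\<in>{1..r+2}. c k * S1 r a k z) = 0" for z
  proof -
    have "(\<Sum>k\<in>{1..r}. c k * (z k)^2) = (\<Sum>k\<in>{M, N}. c k * (z k)^2)"
      using MN by (intro sum.mono_neutral_right) (auto simp: c_def)
    then have "(\<Sum>k\<in>{1..r+2}. c k * S1 r a k z) = cM * (z M)^2 + cN * (z N)^2
        + d1 * (a 1 M * z M + a 1 N * z N)^2 + d2 * (a 2 M * z M + a 2 N * z N)^2"
      using MN(3) by (simp only: sum_S1 f c) (simp add: c)
    with rel show ?thesis by simp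
  qed
  moreover have "\<exists>k\<in>{1..r+2}. c k \<noteq> 0"
    using nz c by (cases "d1 = 0") force+
  ultimately show ?thesis unfolding lin_dep_family_def by blast
qed

lemma S1_dep_imp_pair_dep_or_two_variables:
  assumes "r \<ge> 1" "lin_dep_family {1..r+2} (S1 r a)"
  shows "(\<exists>i\<in>{1..r+2}. \<exists>j\<in>{1..r+2}. i \<noteq> j \<and> lin_dep_family {i, j} (S1 r a)) \<or>
    (\<exists>M\<in>{1..r}. \<exists>N\<in>{1..r}. M \<noteq> N \<and> (\<forall>k\<in>{1..r}. k \<notin> {M, N} \<longrightarrow> a 1 k = 0 \<and> a 2 k = 0))"
proof -
  obtain d1 d2 where nz: "d1 \<noteq> 0 \<or> d2 \<noteq> 0"
    and diagonal: "\<forall>i\<in>{1..r}. \<forall>j\<in>{1..r}. i \<noteq> j \<longrightarrow> d1 * a 1 i * a 1 j + d2 * a 2 i * a 2 j = 0"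
    using S1_dep_imp_diagonal_combination[OF assms(2)] by blast
  have "{1..r} \<noteq> {}" using assms(1) by simp
  from diagonal_combination_of_two_squares_cases[OF diagonal nz this]
  show ?thesis
  proof (elim disjE bexE exE)
    fix i assume "i \<in> {1..r}" "\<forall>j\<in>{1..r} - {i}. a 1 j = 0"
    with S1_pair_dep_if_single_support[of i r 1 a] have "lin_dep_family {i, r+1} (S1 r a)" by simp
    with \<open>i \<in> {1..r}\<close> show ?thesis by (intro disjI1 bexI[of _ i] bexI[of _ "r+1"]) auto
  next
    fix i assume "i \<in> {1..r}" "\<forall>j\<in>{1..r} - {i}. a 2 j = 0"
    with S1_pair_dep_if_single_support[of i r 2 a] have "lin_dep_family {i, r+2} (S1 r a)" by simp
    with \<open>i \<in> {1..r}\<close> show ?thesis by (intro disjI1 bexI[of _ i] bexI[of _ "r+2"]) auto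
  next
    fix u assume "\<forall>j\<in>{1..r}. a 2 j = u * a 1 j"
    then have "lin_dep_family {r+1, r+2} (S1 r a)" by (rule S1_pair_dep_if_proportional)
    then show ?thesis by (intro disjI1 bexI[of _ "r+1"] bexI[of _ "r+2"]) auto
  next
    fix M N assume "M \<in> {1..r}" "N \<in> {1..r}"
      "M \<noteq> N \<and> (\<forall>k\<in>{1..r} - {M, N}. a 1 k = 0 \<and> a 2 k = 0)"
    then show ?thesis by (intro disjI2 bexI[of _ M] bexI[of _ N]) auto
  qed
qed

theorem corollary2p2:
  fixes r :: nat and a :: "nat \<Rightarrow> nat \<Rightarrow> complex"
  assumes "r \<ge> 2"
  shows "lin_dep_family {1..r+2} (S1 r a) \<longleftrightarrow>
           ((\<exists>i\<in>{1..r+2}. \<exists>j\<in>{1..r+2}. i \<noteq> j \<and> lin_dep_family {i, j} (S1 r a)) \<or>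
            (\<exists>M\<in>{1..r}. \<exists>N\<in>{1..r}. M \<noteq> N \<and>
               (\<forall>i\<in>{1..r}. i \<notin> {M, N} \<longrightarrow> a 1 i = 0 \<and> a 2 i = 0)))"
    (is "_ \<longleftrightarrow> ?pair \<or> ?two_variables")
proof
  assume "lin_dep_family {1..r+2} (S1 r a)"
  with assms show "?pair \<or> ?two_variables"
    by (intro S1_dep_imp_pair_dep_or_two_variables) simp_all
next
  assume "?pair \<or> ?two_variables"
  then show "lin_dep_family {1..r+2} (S1 r a)"
  proof
    assume ?pair
    then obtain i j where "i \<in> {1..r+2}" "j \<in> {1..r+2}" "lin_dep_family {i, j} (S1 r a)"
      by blast
    then show ?thesis using lin_dep_family_mono[of "{i, j}" "{1..r+2}"] by simp
  next
    assume ?two_variables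
    then obtain M N where "M \<in> {1..r}" "N \<in> {1..r}" "M \<noteq> N"
      "\<forall>i\<in>{1..r}. i \<notin> {M, N} \<longrightarrow> a 1 i = 0 \<and> a 2 i = 0"
      by blast
    then show ?thesis using S1_dep_if_two_variables[of M r N a] by auto
  qed
qed

end
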